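(* There is no $(v,[k_1,k_2,1],\lambda)$ Hadamard partitioned difference family, for any integers $v,k_1,k_2,\lambda$.
   Context: $G$ is a finite group of order $v$ written additively, with difference $x-y:=x+(-y)$. For $B\subseteq G$, $\Delta B$ is the multiset $\{x-y: x,y\in B, x\neq y\}$; for $\mathcal{F}=\{B_1,\dots,B_t\}$, $\Delta\mathcal{F}$ is the multiset union of the $\Delta B_i$. A $(v,[k_1,\dots,k_t],\lambda)$ partitioned difference family (PDF) is a collection $\{B_1,\dots,B_t\}$ of subsets partitioning some group $G$ of order $v$ with $|B_i|=k_i$ such that $\Delta\mathcal{F}$ contains every non-zero element of $G$ exactly $\lambda$ times. It is Hadamard (HPDF) if $v=2\lambda$. *)

theory Defs
  imports "HOL-Library.Multiset" "HOL-Library.Disjoint_Sets"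
begin

text \<open>The group G is the (finite) carrier type 'a, written additively
  (not necessarily abelian); x - y = x + (- y) holds in group_add.\<close>

definition diff_mset :: "'a::group_add set \<Rightarrow> 'a multiset" where
  "diff_mset B = image_mset (\<lambda>(x, y). x - y) (mset_set {(x, y). x \<in> B \<and> y \<in> B \<and> x \<noteq> y})"

definition diff_family :: "'a::group_add set list \<Rightarrow> 'a multiset" where
  "diff_family F = (\<Sum>B\<leftarrow>F. diff_mset B)"

definition is_PDF :: "nat \<Rightarrow> nat list \<Rightarrow> nat \<Rightarrow> ('a::{group_add,finite}) set list \<Rightarrow> bool" where
  "is_PDF v ks lam F \<longleftrightarrow>
     card (UNIV :: 'a set) = v \<and>
     length F = length ks \<and>
     distinct F \<and> partition_on (UNIV :: 'a set) (set F) \<and>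
     (\<forall>i < length F. card (F ! i) = ks ! i) \<and>
     (\<forall>g :: 'a. g \<noteq> 0 \<longrightarrow> count (diff_family F) g = lam)"

definition is_HPDF :: "nat \<Rightarrow> nat list \<Rightarrow> nat \<Rightarrow> ('a::{group_add,finite}) set list \<Rightarrow> bool" where
  "is_HPDF v ks lam F \<longleftrightarrow> is_PDF v ks lam F \<and> v = 2 * lam"

end

theory Submission
  imports Defs "Jordan_Normal_Form.Schur_Decomposition"
begin

(* Let the blocks be B, C and {a}, and write N_X(g) = autocorr X g, which for g <> 0 is the
   number of times g occurs in Delta X. Since C is the complement of B + {a}, N_C is
   determined by N_B, and for g <> 0 the condition N_B(g) + N_C(g) = lam becomes
     2 N_B(g) + [g + a : B] + [-g + a : B] = 2 k1 + 2 - lam.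
   As v = 2 lam is even, a parity count forces lam to be even and D = B - a to be symmetric,
   so N_D(g) = c - [g : D] with c = k1 + 1 - lam/2; counting pairs gives k1^2 = c (v - 1).
   The matrix M = 2A + I, with A(x, y) = [-x + y : D], then satisfies
   M^2 = 4c J + (4(k1 - c) + 1) I and has row sums 2 k1 + 1. Comparing traces of M and M^2,
   2 k1 + 1 is a simple eigenvalue and all others are +-sqrt(4(k1 - c) + 1), so
   v - 2 k1 - 1 = m sqrt(4(k1 - c) + 1) for an integer m. Writing v = 4u, these Diophantine
   conditions have no solution with k1, k2 >= 1. *)

definition autocorr :: "'a::group_add set \<Rightarrow> 'a \<Rightarrow> int" where
  "autocorr B g = (\<Sum>y\<in>UNIV. of_bool (g + y \<in> B) * of_bool (y \<in> B))"

lemma add_eq_self_iff: "g + y = y \<longleftrightarrow> g = (0 :: 'a::group_add)"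
  by (metis add.left_neutral add_right_cancel)

context
  fixes B :: "'a::{group_add,finite} set"
begin

lemma sum_of_bool_add_left_mem: "(\<Sum>y\<in>UNIV. of_bool (g + y \<in> B)) = int (card B)"
  using sum.reindex_bij_betw[OF bij_plus, of "\<lambda>x. of_bool (x \<in> B) :: int" g] by simp

lemma sum_of_bool_add_right_mem: "(\<Sum>y\<in>UNIV. of_bool (y + g \<in> B)) = int (card B)"
  using sum.reindex_bij_betw[OF bij_plus_right, of "\<lambda>x. of_bool (x \<in> B) :: int" g] by simp

lemma autocorr_eq_card: "autocorr B g = int (card {y. g + y \<in> B \<and> y \<in> B})"
  by (simp add: autocorr_def of_bool_conj[symmetric])

lemma count_diff_mset_eq_autocorr:
  assumes "g \<noteq> 0"
  shows "int (count (diff_mset B) g) = autocorr B g"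
proof -
  let ?pairs = "{(x, y). x \<in> B \<and> y \<in> B \<and> x \<noteq> y}"
  have "count (diff_mset B) g = card {p \<in> ?pairs. g = fst p - snd p}"
    by (simp add: diff_mset_def count_image_mset' split_def)
  also have "{p \<in> ?pairs. g = fst p - snd p} = (\<lambda>y. (g + y, y)) ` {y. g + y \<in> B \<and> y \<in> B}"
  proof (intro Set.set_eqI iffI)
    fix p
    assume "p \<in> {p \<in> ?pairs. g = fst p - snd p}"
    then obtain x y where "p = (x, y)" "x \<in> B" "y \<in> B" "x = g + y"
      by (auto simp: eq_diff_eq)
    then show "p \<in> (\<lambda>y. (g + y, y)) ` {y. g + y \<in> B \<and> y \<in> B}"
      by auto
  next
    fix p
    assume "p \<in> (\<lambda>y. (g + y, y)) ` {y. g + y \<in> B \<and> y \<in> B}"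
    then obtain y where "p = (g + y, y)" "g + y \<in> B" "y \<in> B"
      by auto
    then show "p \<in> {p \<in> ?pairs. g = fst p - snd p}"
      using assms by (simp add: add_eq_self_iff)
  qed
  also have "card \<dots> = card {y. g + y \<in> B \<and> y \<in> B}"
    by (rule card_image) (auto simp: inj_on_def)
  finally show ?thesis by (simp add: autocorr_eq_card)
qed

lemma autocorr_zero: "autocorr B 0 = int (card B)"
  by (simp add: autocorr_eq_card)

lemma sum_autocorr: "(\<Sum>g\<in>UNIV. autocorr B g) = int (card B) ^ 2"
proof -
  have "(\<Sum>g\<in>UNIV. autocorr B g)
      = (\<Sum>y\<in>UNIV. (\<Sum>g\<in>UNIV. of_bool (g + y \<in> B)) * of_bool (y \<in> B))"
    unfolding autocorr_def by (subst sum.swap) (simp only: sum_distrib_right)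
  also have "\<dots> = (\<Sum>y\<in>UNIV. int (card B) * of_bool (y \<in> B))"
    by (simp only: sum_of_bool_add_right_mem)
  finally show ?thesis
    by (simp add: power2_eq_square)
qed

lemma autocorr_Compl: "autocorr (- B) g = int (card (UNIV :: 'a set)) - 2 * int (card B) + autocorr B g"
proof -
  have "autocorr (- B) g = (\<Sum>y\<in>UNIV. 1 - of_bool (g + y \<in> B) - of_bool (y \<in> B)
      + of_bool (g + y \<in> B) * of_bool (y \<in> B))"
    unfolding autocorr_def by (intro sum.cong) auto
  then show ?thesis
    by (simp add: sum.distrib sum_subtractf sum_of_bool_add_left_mem autocorr_def
        del: sum_mult_of_bool_eq sum_of_bool_mult_eq)
qed

lemma autocorr_insert:
  assumes "a \<notin> B" "g \<noteq> 0"
  shows "autocorr (insert a B) g = autocorr B g + of_bool (g + a \<in> B) + of_bool (- g + a \<in> B)"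
proof -
  have indicator: "of_bool (x \<in> insert a B) = of_bool (x \<in> B) + (of_bool (x = a) :: int)" for x
    using assms(1) by auto
  have shift: "g + y = a \<longleftrightarrow> y = - g + a" for y
    by (metis add_minus_cancel minus_add_cancel)
  have "autocorr (insert a B) g = autocorr B g + (\<Sum>y\<in>UNIV. of_bool (g + y \<in> B) * of_bool (y = a))
      + (\<Sum>y\<in>UNIV. of_bool (y = - g + a) * of_bool (y \<in> B))
      + (\<Sum>y\<in>UNIV. of_bool (g + y = a) * of_bool (y = a))"
    unfolding autocorr_def indicator shift by (simp only: distrib_left distrib_right sum.distrib add.assoc)
  also have "\<dots> = autocorr B g + of_bool (g + a \<in> B) + of_bool (- g + a \<in> B)"
    using assms(2) by (simp add: add_eq_self_iff)
  finally show ?thesis .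
qed

lemma autocorr_translate: "autocorr ((\<lambda>x. x - t) ` B) = autocorr B"
proof
  fix g
  have mem: "x \<in> (\<lambda>x. x - t) ` B \<longleftrightarrow> x + t \<in> B" for x
    by (auto simp: image_iff) (metis add_diff_cancel)
  have "autocorr ((\<lambda>x. x - t) ` B) g
      = (\<Sum>y\<in>UNIV. of_bool (g + (y + t) \<in> B) * of_bool (y + t \<in> B))"
    by (simp only: autocorr_def mem add.assoc)
  also have "\<dots> = autocorr B g"
    unfolding autocorr_def
    by (rule sum.reindex_bij_betw[OF bij_plus_right, of "\<lambda>y. of_bool (g + y \<in> B) * of_bool (y \<in> B)"])
  finally show "autocorr ((\<lambda>x. x - t) ` B) g = autocorr B g" .
qed

end

lemma autocorr_singleton: "g \<noteq> 0 \<Longrightarrow> autocorr {a :: 'a::{group_add,finite}} g = 0"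
  by (simp add: autocorr_eq_card add_eq_self_iff)

lemma autocorr_partition_with_singleton:
  fixes B :: "'a::{group_add,finite} set"
  assumes "a \<notin> B" "g \<noteq> 0"
  shows "autocorr B g + autocorr (- insert a B) g + autocorr {a} g
    = 2 * autocorr B g + of_bool (g + a \<in> B) + of_bool (- g + a \<in> B)
      + int (card (UNIV :: 'a set)) - 2 * int (card B) - 2"
  using assms by (simp add: autocorr_Compl autocorr_insert[OF assms] autocorr_singleton)

lemma even_and_symmetric_by_parity:
  fixes D :: "'a::{group_add,finite} set" and l :: int
  assumes zero_notin: "0 \<notin> D" and "even (card (UNIV :: 'a set))"
    and parity: "\<And>g. g \<noteq> 0 \<Longrightarrow> even (of_bool (g \<in> D) + of_bool (- g \<in> D) + l)"
  shows "even l" and "- g \<in> D \<longleftrightarrow> g \<in> D"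
proof -
  show "even l"
  proof (rule ccontr)
    assume "odd l"
    \<comment> \<open>then every non-zero g lies in exactly one of D and -D, so 2 |D| = |G| - 1\<close>
    then have "of_bool (g \<in> D) + of_bool (- g \<in> D) = (of_bool (g \<noteq> 0) :: int)" for g
      using parity[of g] zero_notin by (cases "g = 0") (auto simp: of_bool_def split: if_splits)
    then have "(\<Sum>g\<in>UNIV. of_bool (g \<in> D) + of_bool (- g \<in> D))
        = (\<Sum>g\<in>UNIV. of_bool (g \<noteq> (0 :: 'a)) :: int)"
      by (simp only:)
    moreover have "(\<Sum>g\<in>UNIV. of_bool (g \<in> D) + of_bool (- g \<in> D) :: int) = 2 * int (card D)"
      using sum.reindex_bij_betw[OF bij_uminus, of "\<lambda>x. of_bool (x \<in> D) :: int"]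
      by (simp add: sum.distrib del: sum_of_bool_eq) simp
    moreover have "(\<Sum>g\<in>UNIV. of_bool (g \<noteq> (0 :: 'a)) :: int) = int (card (UNIV :: 'a set)) - 1"
    proof -
      have "{g :: 'a. g \<noteq> 0} = UNIV - {0}"
        by blast
      then show ?thesis
        using finite_UNIV_card_ge_0[where 'a='a] by (simp add: card_Diff_singleton of_nat_diff Suc_le_eq)
    qed
    ultimately have "card (UNIV :: 'a set) = 2 * card D + 1"
      by linarith
    with assms(2) show False
      by simp
  qed
  show "- g \<in> D \<longleftrightarrow> g \<in> D"
  proof (cases "g = 0")
    case False
    then show ?thesis
      using parity[OF False] \<open>even l\<close> by (auto simp: of_bool_def split: if_splits)
  qed simp
qed

lemma card_square_of_autocorr:
  fixes D :: "'a::{group_add,finite} set" and c :: int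
  assumes zero_notin: "0 \<notin> D" and "\<And>g. g \<noteq> 0 \<Longrightarrow> autocorr D g = c - of_bool (g \<in> D)"
  shows "int (card D) ^ 2 = c * (int (card (UNIV :: 'a set)) - 1)"
proof -
  have "int (card D) ^ 2 = autocorr D 0 + (\<Sum>g\<in>UNIV - {0}. autocorr D g)"
    using sum_autocorr[of D] sum.remove[of UNIV 0 "autocorr D"] by simp
  also have "(\<Sum>g\<in>UNIV - {0}. autocorr D g) = (\<Sum>g\<in>UNIV - {0}. c - of_bool (g \<in> D))"
    using assms(2) by simp
  also have "\<dots> = c * (int (card (UNIV :: 'a set)) - 1) - int (card D)"
    using zero_notin finite_UNIV_card_ge_0[where 'a='a]
    by (simp add: sum_subtractf Int_absorb1 subset_Diff_insert of_nat_diff Suc_le_eq)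
  finally show ?thesis
    by (simp add: autocorr_zero)
qed

lemma sum_cayley_column:
  fixes D :: "'a::{group_add,finite} set"
  shows "(\<Sum>x\<in>UNIV. of_bool (- x + y \<in> D)) = int (card D)"
proof -
  have "bij (\<lambda>x. - x + y)"
    using bij_comp[OF bij_uminus bij_plus_right] by (simp add: comp_def)
  from sum.reindex_bij_betw[OF this, of "\<lambda>x. of_bool (x \<in> D) :: int"] show ?thesis
    by simp
qed

lemma sum_cayley_square:
  fixes D :: "'a::{group_add,finite} set"
  assumes symmetric: "\<And>g. - g \<in> D \<longleftrightarrow> g \<in> D"
  shows "(\<Sum>y\<in>UNIV. of_bool (- x + y \<in> D) * of_bool (- y + z \<in> D)) = autocorr D (- x + z)"
proof -
  have "- y + z \<in> D \<longleftrightarrow> - z + y \<in> D" for y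
    using symmetric[of "- y + z"] by (simp add: minus_add)
  then have "(\<Sum>y\<in>UNIV. of_bool (- x + y \<in> D) * of_bool (- y + z \<in> D))
      = (\<Sum>y\<in>UNIV. of_bool (- x + y \<in> D) * of_bool (- z + y \<in> D))"
    by simp
  also have "\<dots> = (\<Sum>w\<in>UNIV. of_bool (- x + (z + w) \<in> D) * of_bool (- z + (z + w) \<in> D))"
    by (rule sum.reindex_bij_betw[OF bij_plus, symmetric])
  also have "\<dots> = autocorr D (- x + z)"
    by (simp add: autocorr_def add.assoc del: sum_mult_of_bool_eq sum_of_bool_mult_eq)
  finally show ?thesis .
qed

(* In matrix form: (2A + I)^2 = 4c J + (4 (|D| - c) + 1) I for A(x, y) = [-x + y : D]. *)
lemma cayley_square_identity:
  fixes D :: "'a::{group_add,finite} set" and c :: int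
  assumes "0 \<notin> D" and symmetric: "\<And>g. - g \<in> D \<longleftrightarrow> g \<in> D"
    and autocorr_D: "\<And>g. g \<noteq> 0 \<Longrightarrow> autocorr D g = c - of_bool (g \<in> D)"
  shows "(\<Sum>y\<in>UNIV. (2 * of_bool (- x + y \<in> D) + of_bool (x = y))
            * (2 * of_bool (- y + z \<in> D) + of_bool (y = z)))
       = 4 * c + of_bool (x = z) * (4 * (int (card D) - c) + 1)"
proof -
  have expand: "(2 * a + d) * (2 * b + e) = 4 * (a * b) + 2 * (a * e) + 2 * (d * b) + d * e"
    for a b d e :: int
    by (simp add: algebra_simps)
  have "(\<Sum>y\<in>UNIV. (2 * of_bool (- x + y \<in> D) + of_bool (x = y))
            * (2 * of_bool (- y + z \<in> D) + of_bool (y = z)))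
      = 4 * (\<Sum>y\<in>UNIV. of_bool (- x + y \<in> D) * of_bool (- y + z \<in> D))
        + 2 * (\<Sum>y\<in>UNIV. of_bool (- x + y \<in> D) * of_bool (y = z))
        + 2 * (\<Sum>y\<in>UNIV. of_bool (x = y) * of_bool (- y + z \<in> D))
        + (\<Sum>y\<in>UNIV. of_bool (x = y) * of_bool (y = z) :: int)"
    by (simp only: expand sum.distrib sum_distrib_left)
  also have "\<dots> = 4 * (autocorr D (- x + z) + of_bool (- x + z \<in> D)) + of_bool (x = z)"
    by (simp only: sum_cayley_square[OF symmetric]) simp
  also have "\<dots> = 4 * c + of_bool (x = z) * (4 * (int (card D) - c) + 1)"
  proof (cases "x = z")
    case True
    then show ?thesis using assms(1) by (simp add: autocorr_zero)
  next
    case False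
    then have "- x + z \<noteq> 0"
      by (metis add_minus_cancel add_0_right)
    then show ?thesis using False autocorr_D by simp
  qed
  finally show ?thesis .
qed

definition mat_trace :: "'a::comm_ring_1 mat \<Rightarrow> 'a" where
  "mat_trace A = (\<Sum>i<dim_row A. A $$ (i, i))"

lemma mat_trace_mult_comm:
  assumes "A \<in> carrier_mat n m" "B \<in> carrier_mat m n"
  shows "mat_trace (A * B) = mat_trace (B * A)"
proof -
  have "mat_trace (A * B) = (\<Sum>i<n. \<Sum>k<m. A $$ (i, k) * B $$ (k, i))"
    unfolding mat_trace_def using assms
    by (intro sum.cong refl) (auto simp: scalar_prod_def lessThan_atLeast0)
  also have "\<dots> = (\<Sum>k<m. \<Sum>i<n. B $$ (k, i) * A $$ (i, k))"
    by (subst sum.swap) (simp add: mult.commute)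
  also have "\<dots> = mat_trace (B * A)"
    unfolding mat_trace_def using assms
    by (intro sum.cong refl) (auto simp: scalar_prod_def lessThan_atLeast0)
  finally show ?thesis .
qed

lemma mat_trace_similar:
  assumes "similar_mat_wit A B P Q" "A \<in> carrier_mat n n"
  shows "mat_trace A = mat_trace B"
proof -
  note wit = similar_mat_witD2[OF assms(2,1)]
  have "mat_trace A = mat_trace (P * (B * Q))"
    using wit by (simp add: assoc_mult_mat[of P n n B n Q n])
  also have "\<dots> = mat_trace ((B * Q) * P)"
    using wit by (intro mat_trace_mult_comm) auto
  also have "\<dots> = mat_trace B"
    using wit by (simp add: assoc_mult_mat[of B n n Q n P n])
  finally show ?thesis .
qed

lemma mat_trace_upper_triangular_square:
  assumes B: "B \<in> carrier_mat n n" and "upper_triangular B"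
  shows "mat_trace (B * B) = (\<Sum>i<n. B $$ (i, i) ^ 2)"
proof -
  have "(B * B) $$ (i, i) = B $$ (i, i) ^ 2" if i: "i < n" for i
  proof -
    have off_diagonal: "B $$ (i, k) * B $$ (k, i) = 0" if "k < n" "k \<noteq> i" for k
      using upper_triangularD[OF assms(2)] B i that by (cases "k < i") auto
    have "(B * B) $$ (i, i) = (\<Sum>k<n. B $$ (i, k) * B $$ (k, i))"
      using B i by (simp add: scalar_prod_def lessThan_atLeast0)
    also have "\<dots> = B $$ (i, i) * B $$ (i, i)"
      using i off_diagonal by (subst sum.remove[of _ i]) auto
    finally show ?thesis
      by (simp add: power2_eq_square)
  qed
  with B show ?thesis
    by (simp add: mat_trace_def)
qed

lemma eigenvalue_list_traces:
  fixes M :: "complex mat"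
  assumes M: "M \<in> carrier_mat n n"
  obtains es where "length es = n" "\<And>d. d \<in> set es \<Longrightarrow> eigenvalue M d"
    "sum_list es = mat_trace M" "sum_list (map (\<lambda>d. d ^ 2) es) = mat_trace (M * M)"
proof -
  obtain es where char_poly: "char_poly M = (\<Prod>a\<leftarrow>es. [:- a, 1:])" and len: "length es = n"
    using char_poly_factorized[OF M] by blast
  obtain B P Q where "schur_decomposition M es = (B, P, Q)"
    by (cases "schur_decomposition M es")
  with schur_decomposition[OF M char_poly]
  have sim: "similar_mat_wit M B P Q" and "upper_triangular B" and diag: "diag_mat B = es"
    by auto
  have B: "B \<in> carrier_mat n n"
    using similar_mat_witD2[OF M sim] by auto
  have "d \<in> set es \<Longrightarrow> eigenvalue M d" for d
    unfolding eigenvalue_root_char_poly[OF M] char_poly by (induction es) auto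
  moreover have "sum_list es = mat_trace M"
    using mat_trace_similar[OF sim M] diag[symmetric] B
    by (simp add: mat_trace_def diag_mat_def sum_list_sum_nth lessThan_atLeast0)
  moreover have "similar_mat_wit (M * M) (B * B) P Q"
    using similar_mat_wit_pow[OF sim, of 2] M B by (simp add: numeral_2_eq_2)
  then have "mat_trace (M * M) = mat_trace (B * B)"
    using M by (intro mat_trace_similar[of _ _ P Q n]) auto
  then have "sum_list (map (\<lambda>d. d ^ 2) es) = mat_trace (M * M)"
    using mat_trace_upper_triangular_square[OF B \<open>upper_triangular B\<close>] diag[symmetric] B
    by (simp add: diag_mat_def sum_list_sum_nth lessThan_atLeast0)
  ultimately show ?thesis
    using that len by blast
qed

lemma eigenvalue_of_column_sums_and_square:
  fixes M :: "complex mat" and \<alpha> \<beta> r :: complex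
  assumes M: "M \<in> carrier_mat n n"
    and square: "\<And>i j. i < n \<Longrightarrow> j < n \<Longrightarrow>
      (M * M) $$ (i, j) = \<alpha> + (if i = j then \<beta> else 0)"
    and column: "\<And>j. j < n \<Longrightarrow> (\<Sum>i<n. M $$ (i, j)) = r"
    and "eigenvalue M d"
  shows "d = r \<or> d ^ 2 = \<beta>"
proof -
  obtain u where u: "u \<in> carrier_vec n" "u \<noteq> 0\<^sub>v n" "M *\<^sub>v u = d \<cdot>\<^sub>v u"
    using \<open>eigenvalue M d\<close> M unfolding eigenvalue_def eigenvector_def by auto
  define \<sigma> where "\<sigma> = (\<Sum>k<n. u $ k)"
  have row: "(\<Sum>k<n. A $$ (i, k) * u $ k) = (A *\<^sub>v u) $ i" if "A \<in> carrier_mat n n" "i < n" for A i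
    using that u(1) by (simp add: scalar_prod_def lessThan_atLeast0)
  have "d * \<sigma> = (\<Sum>i<n. d * u $ i)"
    by (simp add: \<sigma>_def sum_distrib_left)
  also have "\<dots> = (\<Sum>i<n. \<Sum>k<n. M $$ (i, k) * u $ k)"
    using row[OF M] u by (intro sum.cong refl) simp
  also have "\<dots> = (\<Sum>k<n. (\<Sum>i<n. M $$ (i, k)) * u $ k)"
    by (subst sum.swap) (simp add: sum_distrib_right)
  also have "\<dots> = r * \<sigma>"
    using column by (simp add: \<sigma>_def sum_distrib_left)
  finally have sum_eq: "d * \<sigma> = r * \<sigma>" .
  have square_u: "\<alpha> * \<sigma> + \<beta> * u $ i = d ^ 2 * u $ i" if i: "i < n" for i
  proof -
    have "(M * M) *\<^sub>v u = d ^ 2 \<cdot>\<^sub>v u"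
      using u M by (simp add: mult_mat_vec smult_smult_assoc power2_eq_square)
    then have "d ^ 2 * u $ i = (\<Sum>k<n. (M * M) $$ (i, k) * u $ k)"
      using row[of "M * M" i] M u i by simp
    also have "\<dots> = (\<Sum>k<n. \<alpha> * u $ k + (if i = k then \<beta> * u $ k else 0))"
      using square i by (intro sum.cong refl) (auto simp: algebra_simps)
    also have "\<dots> = \<alpha> * \<sigma> + \<beta> * u $ i"
      using i by (simp add: sum.distrib \<sigma>_def sum_distrib_left)
    finally show ?thesis ..
  qed
  show ?thesis
  proof (cases "d = r")
    case False
    with sum_eq have "\<sigma> = 0"
      by simp
    obtain i where "i < n" "u $ i \<noteq> 0"
      using u(1,2) by (metis carrier_vecD eq_vecI index_zero_vec)
    with square_u[of i] \<open>\<sigma> = 0\<close> show ?thesis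
      by simp
  qed simp
qed

lemma sum_list_three_values:
  fixes es :: "'a::comm_ring_1 list"
  assumes "\<forall>d\<in>set es. d = r \<or> d = s \<or> d = - s"
  shows "\<exists>m::int. sum_list es = of_nat (count_list es r) * r + of_int m * s"
  using assms
proof (induction es)
  case Nil
  then show ?case by (intro exI[of _ 0]) simp
next
  case (Cons d es)
  then obtain m :: int where IH: "sum_list es = of_nat (count_list es r) * r + of_int m * s"
    by auto
  consider "d = r" | "d \<noteq> r" "d = s" | "d \<noteq> r" "d = - s"
    using Cons.prems by auto
  then show ?case
  proof cases
    case 1
    then show ?thesis using IH by (intro exI[of _ m]) (simp add: algebra_simps)
  next
    case 2
    then show ?thesis using IH by (intro exI[of _ "m + 1"]) (simp add: algebra_simps)
  next
    case 3
    then show ?thesis using IH by (intro exI[of _ "m - 1"]) (simp add: algebra_simps)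
  qed
qed

lemma sum_list_squares_three_values:
  fixes es :: "'a::comm_ring_1 list"
  assumes "\<forall>d\<in>set es. d = r \<or> d = s \<or> d = - s"
  shows "sum_list (map (\<lambda>d. d ^ 2) es)
    = of_nat (count_list es r) * r ^ 2 + of_nat (length es - count_list es r) * s ^ 2"
  using assms
proof (induction es)
  case (Cons d es)
  have "count_list es r \<le> length es"
    by (rule count_le_length)
  with Cons show ?case
    by (auto simp: algebra_simps Suc_diff_le)
qed simp

lemma trace_condition_of_column_sums_and_square:
  fixes M :: "complex mat" and \<alpha> \<beta> r :: complex
  assumes M: "M \<in> carrier_mat n n"
    and square: "\<And>i j. i < n \<Longrightarrow> j < n \<Longrightarrow>
      (M * M) $$ (i, j) = \<alpha> + (if i = j then \<beta> else 0)"
    and column: "\<And>j. j < n \<Longrightarrow> (\<Sum>i<n. M $$ (i, j)) = r"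
    and perron: "r ^ 2 = of_nat n * \<alpha> + \<beta>" and nonzero: "of_nat n * \<alpha> \<noteq> 0"
  shows "\<exists>m::int. (mat_trace M - r) ^ 2 = of_int (m ^ 2) * \<beta>"
proof -
  obtain es where len: "length es = n" and eigenvalues: "\<And>d. d \<in> set es \<Longrightarrow> eigenvalue M d"
    and trace: "sum_list es = mat_trace M"
    and trace_square: "sum_list (map (\<lambda>d. d ^ 2) es) = mat_trace (M * M)"
    using eigenvalue_list_traces[OF M] by blast
  define s where "s = csqrt \<beta>"
  have s: "s ^ 2 = \<beta>"
    by (simp add: s_def)
  have eigenvalue_cases: "\<forall>d\<in>set es. d = r \<or> d = s \<or> d = - s"
    using eigenvalue_of_column_sums_and_square[OF M square column eigenvalues] s
    by (metis power2_eq_iff)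
  \<comment> \<open>comparing traces of M * M shows that r has multiplicity exactly one\<close>
  define a where "a = count_list es r"
  have "mat_trace (M * M) = of_nat n * (\<alpha> + \<beta>)"
    using M square by (simp add: mat_trace_def)
  with trace_square sum_list_squares_three_values[OF eigenvalue_cases] len s
  have "of_nat a * r ^ 2 + of_nat (n - a) * \<beta> = of_nat n * (\<alpha> + \<beta>)"
    by (simp add: a_def)
  moreover have "a \<le> n"
    using count_le_length[of es r] len by (simp add: a_def)
  ultimately have "of_nat a * (of_nat n * \<alpha>) = 1 * (of_nat n * \<alpha>)"
    by (simp add: perron of_nat_diff algebra_simps)
  then have "a = 1"
    using nonzero by simp
  obtain m :: int where "sum_list es = of_nat a * r + of_int m * s"
    using sum_list_three_values[OF eigenvalue_cases] by (auto simp: a_def)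
  with trace \<open>a = 1\<close> have "mat_trace M - r = of_int m * s"
    by (simp add: algebra_simps)
  then have "(mat_trace M - r) ^ 2 = of_int (m ^ 2) * \<beta>"
    by (simp add: power_mult_distrib s)
  then show ?thesis ..
qed

lemma cayley_matrix:
  fixes D :: "'a::{group_add,finite} set" and c :: int
  assumes zero_notin: "0 \<notin> D" and symmetric: "\<And>g. - g \<in> D \<longleftrightarrow> g \<in> D"
    and autocorr_D: "\<And>g. g \<noteq> 0 \<Longrightarrow> autocorr D g = c - of_bool (g \<in> D)"
  defines "n \<equiv> card (UNIV :: 'a set)" and "k \<equiv> int (card D)"
  obtains M :: "complex mat" where "M \<in> carrier_mat n n" "mat_trace M = of_nat n"
    "\<And>i j. i < n \<Longrightarrow> j < n \<Longrightarrow>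
      (M * M) $$ (i, j) = of_int (4 * c) + (if i = j then of_int (4 * (k - c) + 1) else 0)"
    "\<And>j. j < n \<Longrightarrow> (\<Sum>i<n. M $$ (i, j)) = of_int (2 * k + 1)"
proof -
  obtain e where e: "bij_betw e {..<n} (UNIV :: 'a set)"
    using ex_bij_betw_nat_finite[of "UNIV :: 'a set"] by (auto simp: n_def lessThan_atLeast0)
  have sum_e: "(\<Sum>l<n. f (e l)) = (\<Sum>y\<in>UNIV. f y)" for f :: "'a \<Rightarrow> int"
    using sum.reindex_bij_betw[OF e] .
  have e_eq: "e i = e j \<longleftrightarrow> i = j" if "i < n" "j < n" for i j
    using e that by (auto simp: bij_betw_def inj_on_def)
  define entry :: "'a \<Rightarrow> 'a \<Rightarrow> int"
    where "entry x y = 2 * of_bool (- x + y \<in> D) + of_bool (x = y)" for x y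
  define M :: "complex mat" where "M = mat n n (\<lambda>(i, j). of_int (entry (e i) (e j)))"
  have "M \<in> carrier_mat n n"
    by (simp add: M_def)
  moreover have "mat_trace M = of_nat n"
    using zero_notin by (simp add: mat_trace_def M_def entry_def)
  moreover have "(M * M) $$ (i, j) = of_int (4 * c) + (if i = j then of_int (4 * (k - c) + 1) else 0)"
    if "i < n" "j < n" for i j
  proof -
    have "(M * M) $$ (i, j) = of_int (\<Sum>l<n. entry (e i) (e l) * entry (e l) (e j))"
      using that by (simp add: M_def scalar_prod_def lessThan_atLeast0)
    also have "\<dots> = of_int (\<Sum>y\<in>UNIV. entry (e i) y * entry y (e j))"
      by (simp only: sum_e[of "\<lambda>y. entry (e i) y * entry y (e j)"])
    also have "\<dots> = of_int (4 * c + of_bool (e i = e j) * (4 * (k - c) + 1))"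
      unfolding entry_def k_def
      by (rule arg_cong[where f = of_int], rule cayley_square_identity[OF zero_notin symmetric autocorr_D])
    finally show ?thesis
      using e_eq[OF that] by simp
  qed
  moreover have "(\<Sum>i<n. M $$ (i, j)) = of_int (2 * k + 1)" if "j < n" for j
  proof -
    have "(\<Sum>i<n. M $$ (i, j)) = of_int (\<Sum>i<n. entry (e i) (e j))"
      using that by (simp add: M_def)
    also have "\<dots> = of_int (\<Sum>x\<in>UNIV. entry x (e j))"
      by (simp only: sum_e[of "\<lambda>x. entry x (e j)"])
    also have "\<dots> = of_int (2 * k + 1)"
      using sum_cayley_column[of "e j" D]
      by (simp add: entry_def sum.distrib sum_distrib_left[symmetric] k_def del: sum_of_bool_eq) simp
    finally show ?thesis .
  qed
  ultimately show ?thesis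
    by (rule that)
qed

lemma cayley_matrix_trace_condition:
  fixes D :: "'a::{group_add,finite} set" and c :: int
  assumes zero_notin: "0 \<notin> D" and "D \<noteq> {}"
    and symmetric: "\<And>g. - g \<in> D \<longleftrightarrow> g \<in> D"
    and autocorr_D: "\<And>g. g \<noteq> 0 \<Longrightarrow> autocorr D g = c - of_bool (g \<in> D)"
  shows "\<exists>m::int. (int (card (UNIV :: 'a set)) - 2 * int (card D) - 1) ^ 2
    = m ^ 2 * (4 * (int (card D) - c) + 1)"
proof -
  define n where "n = card (UNIV :: 'a set)"
  define k where "k = int (card D)"
  obtain M :: "complex mat" where M: "M \<in> carrier_mat n n" and "mat_trace M = of_nat n"
    and "\<And>i j. i < n \<Longrightarrow> j < n \<Longrightarrow>
      (M * M) $$ (i, j) = of_int (4 * c) + (if i = j then of_int (4 * (k - c) + 1) else 0)"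
    and "\<And>j. j < n \<Longrightarrow> (\<Sum>i<n. M $$ (i, j)) = of_int (2 * k + 1)"
    using cayley_matrix[OF zero_notin symmetric autocorr_D] unfolding n_def k_def by blast
  moreover have "k ^ 2 = c * (int n - 1)"
    using card_square_of_autocorr[OF zero_notin autocorr_D] by (simp add: k_def n_def)
  then have "(2 * k + 1) ^ 2 = int n * (4 * c) + (4 * (k - c) + 1)"
    by (simp add: power2_eq_square algebra_simps)
  then have "(of_int (2 * k + 1) :: complex) ^ 2 = of_nat n * of_int (4 * c) + of_int (4 * (k - c) + 1)"
    by (metis of_int_add of_int_mult of_int_of_nat_eq of_int_power)
  moreover have "of_nat n * (of_int (4 * c) :: complex) \<noteq> 0"
  proof -
    have "k \<noteq> 0"
      using \<open>D \<noteq> {}\<close> by (simp add: k_def)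
    with \<open>k ^ 2 = c * (int n - 1)\<close> have "c \<noteq> 0"
      by auto
    then show ?thesis
      by (simp add: n_def)
  qed
  ultimately obtain m :: int
    where "(of_nat n - of_int (2 * k + 1)) ^ 2 = of_int (m ^ 2) * (of_int (4 * (k - c) + 1) :: complex)"
    using trace_condition_of_column_sums_and_square[OF M] by metis
  then have "(of_int ((int n - (2 * k + 1)) ^ 2) :: complex) = of_int (m ^ 2 * (4 * (k - c) + 1))"
    by simp
  then have "(int n - 2 * k - 1) ^ 2 = m ^ 2 * (4 * (k - c) + 1)"
    by (simp only: of_int_eq_iff diff_diff_eq)
  then show ?thesis
    unfolding n_def k_def ..
qed

lemma PDF_autocorr_sum:
  fixes F :: "'a::{group_add,finite} set list"
  assumes "is_PDF v ks lam F" "g \<noteq> 0"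
  shows "(\<Sum>B\<leftarrow>F. autocorr B g) = int lam"
proof -
  have "int (count (diff_family F) g) = (\<Sum>B\<leftarrow>F. int (count (diff_mset B) g))"
    by (induction F) (simp_all add: diff_family_def)
  also have "\<dots> = (\<Sum>B\<leftarrow>F. autocorr B g)"
    using assms(2) by (simp add: count_diff_mset_eq_autocorr)
  finally show ?thesis
    using assms by (simp add: is_PDF_def)
qed

lemma PDF_singleton_last_block:
  fixes F :: "'a::{group_add,finite} set list"
  assumes "is_PDF v [k1, k2, 1] lam F"
  obtains B a where "F = [B, - insert a B, {a}]" "a \<notin> B" "B \<noteq> {}" "- insert a B \<noteq> {}"
proof -
  from assms have "length F = 3" and partition: "partition_on UNIV (set F)" and "distinct F"
    and "card (F ! 2) = 1"
    by (auto simp: is_PDF_def)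
  then obtain B C S where "F = [B, C, S]"
    by (auto simp: numeral_3_eq_3 length_Suc_conv)
  moreover from this \<open>card (F ! 2) = 1\<close> obtain a where "S = {a}"
    by (metis One_nat_def card_1_singletonE nth_Cons_Suc nth_Cons_0 numeral_2_eq_2)
  ultimately have F: "F = [B, C, {a}]"
    by simp
  with \<open>distinct F\<close> partition_onD2[OF partition] have "B \<inter> C = {}" "a \<notin> B" "a \<notin> C"
    by (auto simp: disjoint_def)
  moreover have "B \<union> C \<union> {a} = UNIV"
    using partition_onD1[OF partition] F by auto
  ultimately have "C = - insert a B"
    by auto
  moreover have "B \<noteq> {}" "C \<noteq> {}"
    using partition_onD3[OF partition] F by auto
  ultimately show ?thesis
    using that F \<open>a \<notin> B\<close> by blast
qed

lemma HPDF_singleton_block_relation: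
  fixes F :: "'a::{group_add,finite} set list"
  assumes HPDF: "is_HPDF v [k1, k2, 1] lam F"
  obtains D :: "'a set" where "0 \<notin> D" "D \<noteq> {}" "card D = k1"
    "card (UNIV :: 'a set) = k1 + k2 + 1" "k2 \<noteq> 0"
    "\<And>g. g \<noteq> 0 \<Longrightarrow>
      2 * autocorr D g + of_bool (g \<in> D) + of_bool (- g \<in> D) = 2 * int k1 + 2 - int lam"
proof -
  from HPDF have PDF: "is_PDF v [k1, k2, 1] lam F" and "v = 2 * lam"
    unfolding is_HPDF_def by blast+
  obtain B a where F: "F = [B, - insert a B, {a}]" and "a \<notin> B" "B \<noteq> {}" "- insert a B \<noteq> {}"
    using PDF_singleton_last_block[OF PDF] .
  with PDF have "card (UNIV :: 'a set) = v" "card B = k1" "card (- insert a B) = k2"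
    by (auto simp: is_PDF_def nth_Cons')
  moreover have "card (UNIV :: 'a set) = card (insert a B) + card (- insert a B)"
    using card_Un_disjoint[of "insert a B" "- insert a B"] by simp
  ultimately have card_UNIV: "card (UNIV :: 'a set) = k1 + k2 + 1"
    using \<open>a \<notin> B\<close> by simp
  define D where "D = (\<lambda>x. x - a) ` B"
  have mem: "x \<in> D \<longleftrightarrow> x + a \<in> B" for x
    by (auto simp: D_def image_iff) (metis add_diff_cancel)
  have "0 \<notin> D" "D \<noteq> {}" "card D = k1"
    using \<open>a \<notin> B\<close> \<open>B \<noteq> {}\<close> \<open>card B = k1\<close> by (auto simp: mem D_def card_image)
  moreover have "k2 \<noteq> 0"
    using \<open>- insert a B \<noteq> {}\<close> \<open>card (- insert a B) = k2\<close> by auto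
  moreover have "2 * autocorr D g + of_bool (g \<in> D) + of_bool (- g \<in> D) = 2 * int k1 + 2 - int lam"
    if "g \<noteq> 0" for g
  proof -
    have "int lam = autocorr B g + autocorr (- insert a B) g + autocorr {a} g"
      using PDF_autocorr_sum[OF PDF that] by (simp add: F)
    also have "\<dots> = 2 * autocorr B g + of_bool (g + a \<in> B) + of_bool (- g + a \<in> B)
        + int v - 2 * int k1 - 2"
      using autocorr_partition_with_singleton[OF \<open>a \<notin> B\<close> that]
        \<open>card B = k1\<close> \<open>card (UNIV :: 'a set) = v\<close>
      by simp
    finally show ?thesis
      using \<open>v = 2 * lam\<close> autocorr_translate[of a B] by (simp add: mem flip: D_def)
  qed
  ultimately show ?thesis
    using that card_UNIV by blast
qed

lemma HPDF_singleton_block_difference_set: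
  fixes F :: "'a::{group_add,finite} set list"
  assumes HPDF: "is_HPDF v [k1, k2, 1] lam F"
  obtains D :: "'a set" and u :: int where "0 \<notin> D" "D \<noteq> {}" "card D = k1" "k2 \<noteq> 0"
    "int (card (UNIV :: 'a set)) = 4 * u" "int k1 + int k2 + 1 = 4 * u"
    "\<And>g. - g \<in> D \<longleftrightarrow> g \<in> D"
    "\<And>g. g \<noteq> 0 \<Longrightarrow> autocorr D g = int k1 + 1 - u - of_bool (g \<in> D)"
proof -
  have card_lam: "card (UNIV :: 'a set) = 2 * lam"
    using HPDF unfolding is_HPDF_def is_PDF_def by auto
  obtain D :: "'a set" where D: "0 \<notin> D" "D \<noteq> {}" "card D = k1"
    and card_UNIV: "card (UNIV :: 'a set) = k1 + k2 + 1" and "k2 \<noteq> 0"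
    and relation: "\<And>g. g \<noteq> 0 \<Longrightarrow>
      2 * autocorr D g + of_bool (g \<in> D) + of_bool (- g \<in> D) = 2 * int k1 + 2 - int lam"
    using HPDF_singleton_block_relation[OF HPDF] by blast
  have parity: "even (of_bool (g \<in> D) + of_bool (- g \<in> D) + int lam)" if "g \<noteq> 0" for g
  proof -
    have "of_bool (g \<in> D) + of_bool (- g \<in> D) + int lam = 2 * (int k1 + 1 - autocorr D g)"
      using relation[OF that] by (simp add: algebra_simps)
    then show ?thesis
      by simp
  qed
  have "even (card (UNIV :: 'a set))"
    using card_lam by simp
  note even_and_symmetric = even_and_symmetric_by_parity[OF D(1) this parity]
  define u where "u = int lam div 2"
  have lam_u: "int lam = 2 * u"
    using even_and_symmetric(1) by (simp add: u_def)
  have "autocorr D g = int k1 + 1 - u - of_bool (g \<in> D)" if "g \<noteq> 0" for g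
    using relation[OF that] even_and_symmetric(2)[of g] lam_u by simp
  moreover have "int (card (UNIV :: 'a set)) = 4 * u" "int k1 + int k2 + 1 = 4 * u"
    using card_UNIV card_lam lam_u by simp_all
  ultimately show ?thesis
    using that D \<open>k2 \<noteq> 0\<close> even_and_symmetric(2) by blast
qed

lemma HPDF_parameters_unsolvable:
  fixes k1 k2 u m :: int
  assumes "k1 \<ge> 1" "k2 \<ge> 1" "k1 + k2 + 1 = 4 * u"
    and card_square: "k1 ^ 2 = (k1 + 1 - u) * (4 * u - 1)"
    and trace: "(4 * u - 2 * k1 - 1) ^ 2 = m ^ 2 * (4 * u - 3)"
  shows False
proof -
  have "(4 * u - 2 * k1 - 1) ^ 2 = 3 * (4 * u - 1)"
    using card_square by (simp add: power2_eq_square algebra_simps)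
  with trace have product: "(4 * u - 3) * (m ^ 2 - 3) = 6"
    by (simp add: algebra_simps)
  have "u \<ge> 1"
    using assms(1-3) by linarith
  then have "m ^ 2 - 3 > 0"
    using product by (smt (verit) mult_nonneg_nonpos)
  then have "4 * u - 3 \<le> 6"
    using product \<open>u \<ge> 1\<close> by (smt (verit) mult_le_cancel_left1)
  with \<open>u \<ge> 1\<close> consider "u = 1" | "u = 2"
    by linarith
  then show False
  proof cases
    case 1
    with \<open>(4 * u - 2 * k1 - 1) ^ 2 = 3 * (4 * u - 1)\<close> have "(k1 - 3) * k1 = 0"
      by (simp add: power2_eq_square algebra_simps)
    with 1 assms(1-3) show False
      by auto
  next
    case 2
    with product have "5 * (m ^ 2 - 3) = 6"
      by simp
    then show False
      by presburger
  qed
qed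

theorem corollary4p3:
  fixes F :: "('a::{group_add,finite}) set list"
    and v k1 k2 lam :: nat
  shows "\<not> is_HPDF v [k1, k2, 1] lam F"
proof
  assume HPDF: "is_HPDF v [k1, k2, 1] lam F"
  obtain D :: "'a set" and u :: int where D: "0 \<notin> D" "D \<noteq> {}" "card D = k1" and "k2 \<noteq> 0"
    and card_UNIV: "int (card (UNIV :: 'a set)) = 4 * u" and "int k1 + int k2 + 1 = 4 * u"
    and symmetric: "\<And>g. - g \<in> D \<longleftrightarrow> g \<in> D"
    and autocorr_D: "\<And>g. g \<noteq> 0 \<Longrightarrow> autocorr D g = int k1 + 1 - u - of_bool (g \<in> D)"
    using HPDF_singleton_block_difference_set[OF HPDF] by blast
  have card_square: "int k1 ^ 2 = (int k1 + 1 - u) * (4 * u - 1)"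
    using card_square_of_autocorr[OF D(1) autocorr_D] D(3) card_UNIV by simp
  obtain m :: int where "(int (card (UNIV :: 'a set)) - 2 * int (card D) - 1) ^ 2
      = m ^ 2 * (4 * (int (card D) - (int k1 + 1 - u)) + 1)"
    using cayley_matrix_trace_condition[OF D(1,2) symmetric autocorr_D] by blast
  then have trace: "(4 * u - 2 * int k1 - 1) ^ 2 = m ^ 2 * (4 * u - 3)"
    using D(3) card_UNIV by simp
  have "int k1 \<ge> 1" "int k2 \<ge> 1"
    using D(2,3) \<open>k2 \<noteq> 0\<close> by (auto simp: Suc_le_eq card_gt_0_iff)
  with \<open>int k1 + int k2 + 1 = 4 * u\<close> card_square trace show False
    using HPDF_parameters_unsolvable by blast
qed

end
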